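(* In the setting of the context, assume the dispersal covariance is isotropic, $C=\sigma^2I$, that the population is stationary, $\varphi_t\equiv\varphi$, and that $\vec b(x)=\nabla h(x)$ for some function $h$. Then the lineage motion, i.e. the diffusion $Y$ with generator $\mathcal Lf=r\gamma(\sigma^2\Delta f+(2\sigma^2\nabla\log(\gamma\varphi)-\vec b)\cdot\nabla f)$, is reversible with respect to $\pi(x)=\frac{\gamma}{r}\varphi(x)^2e^{-h(x)/\sigma^2}$.
   Context: Setting: $\vec b:\mathbb R^d\to\mathbb R^d$; $\mathcal Bf=\sigma^2\Delta f+\vec b\cdot\nabla f$, $\mathcal B^*f=\sigma^2\Delta f-\nabla\cdot(\vec bf)$. Birth rate $\gamma(x)=\gamma(x,\rho_\gamma*\varphi(x))$ and establishment probability $r(x)=r(x,\rho_r*\varphi(x))$, net growth $F(x,\rho_F*\varphi(x))$, with smooth nonnegative integrable kernels; $\varphi$ is a stationary weak solution of $\partial_t\varphi=r\mathcal B^*(\gamma\varphi)+\varphi F$, arising as the deterministic scaling limit of the population model with Gaussian offspring dispersal of mean $x+\vec b(x)/\theta$ and covariance $\sigma^2I/\theta$. The ancestral lineage of a sampled individual (its ancestor's location traced back in time, defined via the lookdown/line-of-descent representation of the limit) is a time-homogeneous diffusion with the stated generator $\mathcal L$. Reversibility w.r.t. $\pi$ means $\int\pi f\mathcal Lg\,dx=\int\pi g\mathcal Lf\,dx$ for smooth compactly supported $f,g$. *)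

theory Defs
  imports "HOL-Analysis.Analysis"
begin

text \<open>Functions on R^d are modelled as functions on real^'d (d = CARD('d)).\<close>

definition pd :: "'d::finite \<Rightarrow> (real^'d \<Rightarrow> real) \<Rightarrow> real^'d \<Rightarrow> real" where
  "pd i f x = deriv (\<lambda>t. f (x + t *\<^sub>R axis i 1)) 0"

definition grad :: "(real^'d::finite \<Rightarrow> real) \<Rightarrow> real^'d \<Rightarrow> real^'d" where
  "grad f x = (\<chi> i. pd i f x)"

definition lap :: "(real^'d::finite \<Rightarrow> real) \<Rightarrow> real^'d \<Rightarrow> real" where
  "lap f x = (\<Sum>i\<in>UNIV. pd i (pd i f) x)"

fun Ck :: "nat \<Rightarrow> (real^'d::finite \<Rightarrow> real) \<Rightarrow> bool" where
  "Ck 0 f = continuous_on UNIV f"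
| "Ck (Suc k) f = ((\<forall>x. f differentiable (at x)) \<and> (\<forall>i. Ck k (pd i f)))"

definition smooth :: "(real^'d::finite \<Rightarrow> real) \<Rightarrow> bool" where
  "smooth f \<longleftrightarrow> (\<forall>k. Ck k f)"

definition test_fun :: "(real^'d::finite \<Rightarrow> real) \<Rightarrow> bool" where
  "test_fun f \<longleftrightarrow> smooth f \<and> compact (closure {x. f x \<noteq> 0})"

definition conv :: "(real^'d::finite \<Rightarrow> real) \<Rightarrow> (real^'d \<Rightarrow> real) \<Rightarrow> real^'d \<Rightarrow> real" where
  "conv \<rho> \<phi> x = (LINT y|lborel. \<rho> (x - y) * \<phi> y)"

definition Bop :: "real \<Rightarrow> (real^'d::finite \<Rightarrow> real^'d) \<Rightarrow> (real^'d \<Rightarrow> real) \<Rightarrow> real^'d \<Rightarrow> real" where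
  "Bop \<sigma> b f x = \<sigma>\<^sup>2 * lap f x + b x \<bullet> grad f x"

text \<open>phi is a stationary weak solution of  d/dt phi = r B^*(gamma phi) + phi F:
  for every test function f, \<integral> gamma phi B(r f) + f phi F dx = 0.\<close>
definition stationary_weak ::
  "real \<Rightarrow> (real^'d::finite \<Rightarrow> real^'d) \<Rightarrow> (real^'d \<Rightarrow> real) \<Rightarrow> (real^'d \<Rightarrow> real)
     \<Rightarrow> (real^'d \<Rightarrow> real) \<Rightarrow> (real^'d \<Rightarrow> real) \<Rightarrow> bool" where
  "stationary_weak \<sigma> b \<gamma> r F \<phi> \<longleftrightarrow>
     (\<forall>f. test_fun f \<longrightarrow>
        (LINT x|lborel. \<gamma> x * \<phi> x * Bop \<sigma> b (\<lambda>y. r y * f y) x + f x * \<phi> x * F x) = 0)"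

definition Lgen ::
  "real \<Rightarrow> (real^'d::finite \<Rightarrow> real^'d) \<Rightarrow> (real^'d \<Rightarrow> real) \<Rightarrow> (real^'d \<Rightarrow> real)
     \<Rightarrow> (real^'d \<Rightarrow> real) \<Rightarrow> (real^'d \<Rightarrow> real) \<Rightarrow> real^'d \<Rightarrow> real" where
  "Lgen \<sigma> b \<gamma> r \<phi> f x = r x * \<gamma> x *
     (\<sigma>\<^sup>2 * lap f x + ((2 * \<sigma>\<^sup>2) *\<^sub>R grad (\<lambda>y. ln (\<gamma> y * \<phi> y)) x - b x) \<bullet> grad f x)"

definition reversible_wrt :: "((real^'d::finite \<Rightarrow> real) \<Rightarrow> real^'d \<Rightarrow> real) \<Rightarrow> (real^'d \<Rightarrow> real) \<Rightarrow> bool" where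
  "reversible_wrt L \<pi> \<longleftrightarrow>
     (\<forall>f g. test_fun f \<longrightarrow> test_fun g \<longrightarrow>
        (LINT x|lborel. \<pi> x * f x * L g x) = (LINT x|lborel. \<pi> x * g x * L f x))"

end

(* With w = r gamma pi = (gamma phi)^2 exp (-h / sigma^2), the hypothesis b = grad h gives
   sigma^2 grad w = w (2 sigma^2 grad log (gamma phi) - b), hence pi L g = sigma^2 div (w grad g).
   The lineage generator is therefore in divergence form with respect to pi, and such an operator
   is symmetric on test functions: f div (w grad g) - g div (w grad f) = div (w (f grad g - g grad f)),
   whose integral vanishes for compactly supported integrands. *)

theory Submission
  imports Defs
begin

lemma has_real_derivative_pd_line:
  fixes V :: "real^'d::finite \<Rightarrow> real"
  assumes "V differentiable (at (x + s *\<^sub>R axis i 1))"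
  shows "((\<lambda>t. V (x + t *\<^sub>R axis i 1)) has_real_derivative pd i V (x + s *\<^sub>R axis i 1)) (at s)"
proof -
  obtain V' where V': "(V has_derivative V') (at (x + s *\<^sub>R axis i 1))"
    using assms differentiable_def by blast
  have line_deriv: "((\<lambda>t. V (y + t *\<^sub>R axis i 1)) has_real_derivative V' (axis i 1)) (at t)"
    if "y + t *\<^sub>R axis i 1 = x + s *\<^sub>R axis i 1" for y t
  proof -
    have "((\<lambda>t. y + t *\<^sub>R axis i 1) has_derivative (\<lambda>u. u *\<^sub>R axis i 1)) (at t)"
      by (auto intro!: derivative_eq_intros)
    from has_derivative_compose[OF this V'[folded that]]
    show ?thesis
      using linear_scale[OF has_derivative_linear[OF V']]
      by (simp add: has_field_derivative_def mult_commute_abs)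
  qed
  have "pd i V (x + s *\<^sub>R axis i 1) = V' (axis i 1)"
    unfolding pd_def by (rule DERIV_imp_deriv) (rule line_deriv, simp)
  then show ?thesis using line_deriv[of x s] by simp
qed

lemma has_real_derivative_pd:
  fixes V :: "real^'d::finite \<Rightarrow> real"
  assumes "V differentiable (at x)"
  shows "((\<lambda>t. V (x + t *\<^sub>R axis i 1)) has_real_derivative pd i V x) (at 0)"
  using has_real_derivative_pd_line[of V x 0 i] assms by simp

lemma pd_eqI:
  fixes V :: "real^'d::finite \<Rightarrow> real"
  assumes "((\<lambda>t. V (x + t *\<^sub>R axis i 1)) has_real_derivative D) (at 0)"
  shows "pd i V x = D"
  unfolding pd_def using assms by (rule DERIV_imp_deriv)

lemma pd_mult:
  fixes f g :: "real^'d::finite \<Rightarrow> real"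
  assumes "f differentiable (at x)" "g differentiable (at x)"
  shows "pd i (\<lambda>y. f y * g y) x = f x * pd i g x + pd i f x * g x"
  by (rule pd_eqI)
    (use DERIV_mult[OF has_real_derivative_pd[OF assms(1)] has_real_derivative_pd[OF assms(2)]]
      in \<open>simp add: algebra_simps\<close>)

lemma pd_diff:
  fixes f g :: "real^'d::finite \<Rightarrow> real"
  assumes "f differentiable (at x)" "g differentiable (at x)"
  shows "pd i (\<lambda>y. f y - g y) x = pd i f x - pd i g x"
  by (rule pd_eqI)
    (use DERIV_diff[OF has_real_derivative_pd[OF assms(1)] has_real_derivative_pd[OF assms(2)]]
      in simp)

lemma pd_cmult:
  fixes f :: "real^'d::finite \<Rightarrow> real"
  assumes "f differentiable (at x)"
  shows "pd i (\<lambda>y. c * f y) x = c * pd i f x"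
  by (rule pd_eqI) (use DERIV_cmult[OF has_real_derivative_pd[OF assms]] in simp)

lemma pd_exp:
  fixes f :: "real^'d::finite \<Rightarrow> real"
  assumes "f differentiable (at x)"
  shows "pd i (\<lambda>y. exp (f y)) x = exp (f x) * pd i f x"
  by (rule pd_eqI) (use DERIV_chain2[OF DERIV_exp has_real_derivative_pd[OF assms]] in simp)

lemma pd_ln:
  fixes f :: "real^'d::finite \<Rightarrow> real"
  assumes "f differentiable (at x)" "f x > 0"
  shows "pd i (\<lambda>y. ln (f y)) x = pd i f x / f x"
  by (rule pd_eqI)
    (use DERIV_chain2[OF DERIV_ln has_real_derivative_pd[OF assms(1)]] assms(2)
      in \<open>simp add: field_simps\<close>)

lemma Ck_1_iff:
  "Ck 1 f \<longleftrightarrow> (\<forall>x. f differentiable (at x)) \<and> (\<forall>i. continuous_on UNIV (pd i f))"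
  by simp

(* the simplifier turns Ck 1 into Ck (Suc 0) and would unfold it *)
declare Ck.simps [simp del]

lemma Ck_1_differentiable: "Ck 1 f \<Longrightarrow> f differentiable (at x)"
  unfolding Ck_1_iff by blast

lemma Ck_1_continuous_on_pd: "Ck 1 f \<Longrightarrow> continuous_on UNIV (pd i f)"
  unfolding Ck_1_iff by blast

lemma Ck_1_continuous_on: "Ck 1 f \<Longrightarrow> continuous_on UNIV f"
  by (meson Ck_1_differentiable continuous_at_imp_continuous_on differentiable_imp_continuous_within)

lemma Ck_1_mult:
  assumes f: "Ck 1 f" and g: "Ck 1 g"
  shows "Ck 1 (\<lambda>y. f y * g y)"
proof -
  have "pd i (\<lambda>y. f y * g y) = (\<lambda>x. f x * pd i g x + pd i f x * g x)" for i
    using pd_mult[OF Ck_1_differentiable[OF f] Ck_1_differentiable[OF g]] by blast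
  then show ?thesis
    using Ck_1_differentiable[OF f] Ck_1_differentiable[OF g] Ck_1_continuous_on[OF f]
      Ck_1_continuous_on[OF g] Ck_1_continuous_on_pd[OF f] Ck_1_continuous_on_pd[OF g]
    unfolding Ck_1_iff by (auto intro!: differentiable_mult continuous_intros)
qed

lemma Ck_1_diff:
  assumes f: "Ck 1 f" and g: "Ck 1 g"
  shows "Ck 1 (\<lambda>y. f y - g y)"
proof -
  have "pd i (\<lambda>y. f y - g y) = (\<lambda>x. pd i f x - pd i g x)" for i
    using pd_diff[OF Ck_1_differentiable[OF f] Ck_1_differentiable[OF g]] by blast
  then show ?thesis
    using Ck_1_differentiable[OF f] Ck_1_differentiable[OF g]
      Ck_1_continuous_on_pd[OF f] Ck_1_continuous_on_pd[OF g]
    unfolding Ck_1_iff by (auto intro!: differentiable_diff continuous_intros)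
qed

lemma Ck_1_cmult:
  assumes f: "Ck 1 f"
  shows "Ck 1 (\<lambda>y. c * f y)"
proof -
  have "pd i (\<lambda>y. c * f y) = (\<lambda>x. c * pd i f x)" for i
    using pd_cmult[OF Ck_1_differentiable[OF f]] by blast
  then show ?thesis
    using Ck_1_differentiable[OF f] Ck_1_continuous_on_pd[OF f]
    unfolding Ck_1_iff by (auto intro!: differentiable_mult continuous_intros)
qed

lemma Ck_1_exp:
  assumes f: "Ck 1 f"
  shows "Ck 1 (\<lambda>y. exp (f y))"
proof -
  have "exp differentiable (at (f x))" for x
    using DERIV_exp real_differentiable_def by blast
  then have "(\<lambda>y. exp (f y)) differentiable (at x)" for x
    by (rule differentiable_compose) (rule Ck_1_differentiable[OF f])
  moreover have "pd i (\<lambda>y. exp (f y)) = (\<lambda>x. exp (f x) * pd i f x)" for i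
    using pd_exp[OF Ck_1_differentiable[OF f]] by blast
  ultimately show ?thesis
    using Ck_1_continuous_on_pd[OF f] Ck_1_continuous_on[OF f]
    unfolding Ck_1_iff by (auto intro!: continuous_intros)
qed

lemma Ck_1_ln:
  assumes f: "Ck 1 f" and pos: "\<And>x. f x > 0"
  shows "Ck 1 (\<lambda>y. ln (f y))"
proof -
  have "ln differentiable (at (f x))" for x
    using DERIV_ln[OF pos] real_differentiable_def by blast
  then have "(\<lambda>y. ln (f y)) differentiable (at x)" for x
    by (rule differentiable_compose) (rule Ck_1_differentiable[OF f])
  moreover have "pd i (\<lambda>y. ln (f y)) = (\<lambda>x. pd i f x / f x)" for i
    using pd_ln[OF Ck_1_differentiable[OF f] pos] by blast
  moreover have "\<forall>x\<in>UNIV. f x \<noteq> 0"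
    using pos by (metis less_irrefl)
  ultimately show ?thesis
    using Ck_1_continuous_on_pd[OF f] Ck_1_continuous_on[OF f]
    unfolding Ck_1_iff by (auto intro!: continuous_intros)
qed

lemma smooth_imp_Ck_1: "smooth f \<Longrightarrow> Ck 1 f"
  by (simp add: smooth_def)

lemma smooth_imp_Ck_1_pd: "smooth f \<Longrightarrow> Ck 1 (pd i f)"
  unfolding smooth_def using Ck.simps(2)[of 1 f] by auto

lemma integrable_lborel_compact_support:
  fixes f :: "'a::euclidean_space \<Rightarrow> 'b::{banach, second_countable_topology}"
  assumes "continuous_on UNIV f" "compact K" "\<And>x. x \<notin> K \<Longrightarrow> f x = 0"
  shows "integrable lborel f"
proof -
  have "integrable lborel (\<lambda>x. indicator K x *\<^sub>R f x)"
    by (rule borel_integrable_compact[OF assms(2) continuous_on_subset[OF assms(1)]]) auto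
  moreover have "(\<lambda>x. indicator K x *\<^sub>R f x) = f"
    using assms(3) by (auto simp: indicator_def fun_eq_iff)
  ultimately show ?thesis by simp
qed

lemma lborel_integral_translate:
  fixes f :: "'a::euclidean_space \<Rightarrow> real"
  assumes "integrable lborel f"
  shows "integrable lborel (\<lambda>x. f (x + c))"
    and "(LINT x|lborel. f (x + c)) = (LINT x|lborel. f x)"
proof -
  have f: "f \<in> borel_measurable borel"
    using borel_measurable_integrable[OF assms] by simp
  have "integrable (distr lborel borel ((+) c)) f"
    using assms by (simp add: lborel_distr_plus)
  then show "integrable lborel (\<lambda>x. f (x + c))"
    using f by (subst (asm) integrable_distr_eq) (auto simp: add.commute)
  have "(LINT x|lborel. f x) = integral\<^sup>L (distr lborel borel ((+) c)) f"
    by (simp add: lborel_distr_plus)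
  also have "\<dots> = (LINT x|lborel. f (c + x))"
    by (rule integral_distr) (use f in auto)
  finally show "(LINT x|lborel. f (x + c)) = (LINT x|lborel. f x)"
    by (simp add: add.commute)
qed

lemma pd_mean_value:
  fixes V :: "real^'d::finite \<Rightarrow> real"
  assumes "\<And>y. V differentiable (at y)" "0 < t"
  obtains z where "0 < z" "z < t"
    and "V (x + t *\<^sub>R axis i 1) - V x = t * pd i V (x + z *\<^sub>R axis i 1)"
proof -
  have "\<exists>z>0. z < t \<and> V (x + t *\<^sub>R axis i 1) - V (x + 0 *\<^sub>R axis i 1)
      = (t - 0) * pd i V (x + z *\<^sub>R axis i 1)"
    by (rule MVT2[where f = "\<lambda>s. V (x + s *\<^sub>R axis i 1)"])
      (use assms in \<open>auto intro: has_real_derivative_pd_line\<close>)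
  then show ?thesis using that by auto
qed

lemma difference_quotient_tendsto_pd:
  fixes V :: "real^'d::finite \<Rightarrow> real"
  assumes "V differentiable (at x)" and "filterlim t (at 0) F"
  shows "((\<lambda>n. (V (x + t n *\<^sub>R axis i 1) - V x) / t n) \<longlongrightarrow> pd i V x) F"
proof -
  have "((\<lambda>s. (V (x + s *\<^sub>R axis i 1) - V x) / s) \<longlongrightarrow> pd i V x) (at 0)"
    using has_real_derivative_pd[OF assms(1)] by (simp add: has_field_derivative_iff)
  from filterlim_compose[OF this assms(2)] show ?thesis by simp
qed

lemma difference_quotient_pd_dominated:
  fixes V :: "real^'d::finite \<Rightarrow> real"
  assumes V: "\<And>y. V differentiable (at y)" and supp: "\<And>x. R < norm x \<Longrightarrow> V x = 0"
    and M: "\<And>y. y \<in> cball 0 (R + 2) \<Longrightarrow> \<bar>pd i V y\<bar> \<le> M"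
    and t: "0 < t" "t \<le> 1"
  shows "\<bar>(V (x + t *\<^sub>R axis i 1) - V x) / t\<bar> \<le> M * indicator (cball 0 (R + 1)) x"
proof (cases "R + 1 < norm x")
  case True
  then have "R < norm (x + t *\<^sub>R axis i 1)"
    using norm_triangle_ineq2[of x "- (t *\<^sub>R axis i 1)"] t by simp
  then show ?thesis using True supp[of x] supp[of "x + t *\<^sub>R axis i 1"] by simp
next
  case False
  obtain z where z: "0 < z" "z < t"
    and mv: "V (x + t *\<^sub>R axis i 1) - V x = t * pd i V (x + z *\<^sub>R axis i 1)"
    using pd_mean_value[OF V t(1)] by blast
  have "norm (x + z *\<^sub>R axis i 1) \<le> R + 2"
    using norm_triangle_ineq[of x "z *\<^sub>R axis i 1"] z t False by simp
  then show ?thesis using M[of "x + z *\<^sub>R axis i 1"] False mv t by simp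
qed

lemma integral_pd_compact_support:
  fixes V :: "real^'d::finite \<Rightarrow> real"
  assumes V: "Ck 1 V" and K: "compact K" and supp: "\<And>x. x \<notin> K \<Longrightarrow> V x = 0"
  shows "integrable lborel (pd i V)" and "(LINT x|lborel. pd i V x) = 0"
proof -
  \<comment> \<open>Difference quotients integrate to 0 by translation invariance of lborel;
    dominated convergence passes this to the limit.\<close>
  obtain R where R: "\<And>x. R < norm x \<Longrightarrow> V x = 0"
    using compact_imp_bounded[OF K] supp unfolding bounded_pos by (meson not_le)
  obtain M where M: "\<And>y. y \<in> cball 0 (R + 2) \<Longrightarrow> \<bar>pd i V y\<bar> \<le> M"
    using compact_imp_bounded[OF compact_continuous_image[OF
        continuous_on_subset[OF Ck_1_continuous_on_pd[OF V]] compact_cball]]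
    unfolding bounded_iff by (metis image_eqI real_norm_def subset_UNIV)
  have intV: "integrable lborel V"
    by (rule integrable_lborel_compact_support[OF Ck_1_continuous_on[OF V] K supp])
  define t where "t n = inverse (real (Suc n))" for n
  have t: "0 < t n" "t n \<le> 1" for n
    by (auto simp: t_def field_simps)
  have t_lim: "filterlim t (at 0) sequentially"
    using LIMSEQ_inverse_real_of_nat t(1) unfolding filterlim_at t_def
    by (auto simp: less_imp_neq[symmetric])
  define D where "D n x = (V (x + t n *\<^sub>R axis i 1) - V x) / t n" for n x
  have "integral\<^sup>L lborel (D n) = 0" for n
    unfolding D_def
    by (simp add: Bochner_Integration.integral_diff[OF lborel_integral_translate(1)[OF intV] intV]
        lborel_integral_translate(2)[OF intV])
  have lim: "AE x in lborel. (\<lambda>n. D n x) \<longlonglongrightarrow> pd i V x"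
    unfolding D_def
    by (intro AE_I2 difference_quotient_tendsto_pd Ck_1_differentiable[OF V] t_lim)
  have dom: "AE x in lborel. norm (D n x) \<le> M * indicator (cball 0 (R + 1)) x" for n
    unfolding D_def real_norm_def
    by (intro AE_I2 difference_quotient_pd_dominated Ck_1_differentiable[OF V] R M t)
  have meas: "pd i V \<in> borel_measurable lborel" "D n \<in> borel_measurable lborel" for n
    unfolding D_def
    using borel_measurable_continuous_onI[OF Ck_1_continuous_on_pd[OF V]]
      borel_measurable_continuous_onI[OF Ck_1_continuous_on[OF V]]
    by measurable
  have bound: "integrable lborel (\<lambda>x. M * indicator (cball 0 (R + 1)) x)"
    using borel_integrable_compact[of "cball 0 (R + 1)" "\<lambda>_. M"] by (simp add: mult.commute)
  show "integrable lborel (pd i V)"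
    by (rule integrable_dominated_convergence[OF meas bound lim dom])
  have "(\<lambda>n. integral\<^sup>L lborel (D n)) \<longlonglongrightarrow> integral\<^sup>L lborel (pd i V)"
    by (rule integral_dominated_convergence[OF meas bound lim dom])
  with \<open>\<And>n. integral\<^sup>L lborel (D n) = 0\<close> show "(LINT x|lborel. pd i V x) = 0"
    by (simp add: LIMSEQ_const_iff)
qed

definition weighted_laplacian ::
  "(real^'d::finite \<Rightarrow> real) \<Rightarrow> (real^'d \<Rightarrow> real) \<Rightarrow> real^'d \<Rightarrow> real" where
  "weighted_laplacian w g x = w x * lap g x + grad w x \<bullet> grad g x"

lemma continuous_on_weighted_laplacian:
  assumes w: "Ck 1 w" and g: "Ck 1 g" and g2: "\<And>i. Ck 1 (pd i g)"
  shows "continuous_on UNIV (weighted_laplacian w g)"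
  unfolding weighted_laplacian_def lap_def grad_def inner_vec_def
  using Ck_1_continuous_on[OF w] Ck_1_continuous_on_pd[OF w] Ck_1_continuous_on_pd[OF g]
    Ck_1_continuous_on_pd[OF g2]
  by (auto intro!: continuous_intros)

lemma weighted_laplacian_Lagrange_identity:
  assumes w: "Ck 1 w" and f: "Ck 1 f" "\<And>i. Ck 1 (pd i f)" and g: "Ck 1 g" "\<And>i. Ck 1 (pd i g)"
  shows "f x * weighted_laplacian w g x - g x * weighted_laplacian w f x
    = (\<Sum>i\<in>UNIV. pd i (\<lambda>y. w y * (f y * pd i g y - g y * pd i f y)) x)"
proof -
  have "pd i (\<lambda>y. w y * (f y * pd i g y - g y * pd i f y)) x
      = f x * (w x * pd i (pd i g) x + pd i w x * pd i g x)
        - g x * (w x * pd i (pd i f) x + pd i w x * pd i f x)" for i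
  proof -
    have "(\<lambda>y. f y * pd i g y - g y * pd i f y) differentiable (at x)"
      by (intro Ck_1_differentiable Ck_1_diff Ck_1_mult f g)
    then have "pd i (\<lambda>y. w y * (f y * pd i g y - g y * pd i f y)) x
        = w x * pd i (\<lambda>y. f y * pd i g y - g y * pd i f y) x
          + pd i w x * (f x * pd i g x - g x * pd i f x)"
      by (rule pd_mult[OF Ck_1_differentiable[OF w]])
    moreover have "pd i (\<lambda>y. f y * pd i g y - g y * pd i f y) x
        = f x * pd i (pd i g) x - g x * pd i (pd i f) x"
      using pd_diff[OF Ck_1_differentiable[OF Ck_1_mult[OF f(1) g(2)]]
          Ck_1_differentiable[OF Ck_1_mult[OF g(1) f(2)]]]
        pd_mult[OF Ck_1_differentiable[OF f(1)] Ck_1_differentiable[OF g(2)]]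
        pd_mult[OF Ck_1_differentiable[OF g(1)] Ck_1_differentiable[OF f(2)]]
      by simp
    ultimately show ?thesis by (simp add: algebra_simps)
  qed
  then have "(\<Sum>i\<in>UNIV. pd i (\<lambda>y. w y * (f y * pd i g y - g y * pd i f y)) x)
      = (\<Sum>i\<in>UNIV. f x * (w x * pd i (pd i g) x + pd i w x * pd i g x)
          - g x * (w x * pd i (pd i f) x + pd i w x * pd i f x))"
    by (intro sum.cong) simp_all
  then show ?thesis
    unfolding weighted_laplacian_def lap_def grad_def inner_vec_def
    by (simp add: sum_distrib_left sum_subtractf sum.distrib algebra_simps)
qed

lemma weighted_laplacian_symmetric:
  fixes w f g :: "real^'d::finite \<Rightarrow> real"
  assumes w: "Ck 1 w" and f: "test_fun f" and g: "test_fun g"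
  shows "(LINT x|lborel. f x * weighted_laplacian w g x)
       = (LINT x|lborel. g x * weighted_laplacian w f x)"
proof -
  have f1: "Ck 1 f" and f2: "Ck 1 (pd i f)" and g1: "Ck 1 g" and g2: "Ck 1 (pd i g)" for i
    using f g unfolding test_fun_def by (blast intro: smooth_imp_Ck_1 smooth_imp_Ck_1_pd)+
  define K where "K = closure {x. f x \<noteq> 0} \<union> closure {x. g x \<noteq> 0}"
  have K: "compact K"
    using f g by (auto simp: test_fun_def K_def)
  have f0: "f x = 0" and g0: "g x = 0" if "x \<notin> K" for x
    using that closure_subset[of "{x. f x \<noteq> 0}"] closure_subset[of "{x. g x \<noteq> 0}"]
    by (auto simp: K_def)
  have integrable: "integrable lborel (\<lambda>x. u x * weighted_laplacian w v x)"
    if "Ck 1 u" "Ck 1 v" "\<And>i. Ck 1 (pd i v)" "\<And>x. x \<notin> K \<Longrightarrow> u x = 0" for u v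
    using that
    by (intro integrable_lborel_compact_support[OF _ K]
        continuous_on_mult[OF Ck_1_continuous_on continuous_on_weighted_laplacian[OF w]]) auto
  define flux where "flux i y = w y * (f y * pd i g y - g y * pd i f y)" for i y
  have flux: "Ck 1 (flux i)" "x \<notin> K \<Longrightarrow> flux i x = 0" for i x
    unfolding flux_def by (intro Ck_1_mult Ck_1_diff w f1 f2 g1 g2) (simp_all add: f0 g0)
  have "(LINT x|lborel. f x * weighted_laplacian w g x) - (LINT x|lborel. g x * weighted_laplacian w f x)
      = (LINT x|lborel. f x * weighted_laplacian w g x - g x * weighted_laplacian w f x)"
    using integrable[OF f1 g1 g2 f0] integrable[OF g1 f1 f2 g0] by simp
  also have "\<dots> = (LINT x|lborel. (\<Sum>i\<in>UNIV. pd i (flux i) x))"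
    unfolding flux_def by (simp add: weighted_laplacian_Lagrange_identity[OF w f1 f2 g1 g2])
  also have "\<dots> = (\<Sum>i\<in>UNIV. LINT x|lborel. pd i (flux i) x)"
    using integral_pd_compact_support(1)[OF flux(1) K flux(2)] by (simp add: integral_sum)
  also have "\<dots> = 0"
    using integral_pd_compact_support(2)[OF flux(1) K flux(2)] by simp
  finally show ?thesis by simp
qed

lemma Lgen_eq_weighted_laplacian:
  fixes \<sigma> :: real and h \<gamma> r \<phi> :: "real^'d::finite \<Rightarrow> real"
  assumes \<sigma>: "\<sigma> \<noteq> 0" and drift: "\<And>x. b x = grad h x"
    and \<gamma>: "Ck 1 \<gamma>" and \<phi>: "Ck 1 \<phi>" and h: "Ck 1 h"
    and pos: "\<And>x. \<gamma> x * \<phi> x > 0" and r: "r x \<noteq> 0"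
  shows "\<gamma> x / r x * (\<phi> x)\<^sup>2 * exp (- h x / \<sigma>\<^sup>2) * Lgen \<sigma> b \<gamma> r \<phi> g x
       = \<sigma>\<^sup>2 * weighted_laplacian (\<lambda>y. exp (2 * ln (\<gamma> y * \<phi> y) - h y / \<sigma>\<^sup>2)) g x"
proof -
  define lg where "lg = (\<lambda>y. ln (\<gamma> y * \<phi> y))"
  define w where "w = (\<lambda>y. exp (2 * lg y - h y / \<sigma>\<^sup>2))"
  have lg: "Ck 1 lg"
    unfolding lg_def by (rule Ck_1_ln[OF Ck_1_mult[OF \<gamma> \<phi>] pos])
  have "pd i (\<lambda>y. 2 * lg y - h y / \<sigma>\<^sup>2) x = 2 * pd i lg x - pd i h x / \<sigma>\<^sup>2" for i
    by (rule pd_eqI)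
      (use \<sigma> in \<open>auto intro!: derivative_eq_intros has_real_derivative_pd Ck_1_differentiable
        lg h simp: field_simps power2_eq_square power4_eq_xxxx\<close>)
  moreover have "(\<lambda>y. 2 * lg y - h y / \<sigma>\<^sup>2) differentiable (at x)"
    using Ck_1_differentiable[OF lg] Ck_1_differentiable[OF h] \<sigma>
    by (intro differentiable_diff differentiable_mult differentiable_divide differentiable_const)
      auto
  ultimately have pd_w: "pd i w x = w x * (2 * pd i lg x - pd i h x / \<sigma>\<^sup>2)" for i
    unfolding w_def by (simp add: pd_exp)
  have "exp (2 * lg x) = (\<gamma> x * \<phi> x)\<^sup>2"
    using pos[of x] exp_of_nat_mult[of 2 "lg x"] by (simp add: lg_def)
  then have "w x = (\<gamma> x * \<phi> x)\<^sup>2 * exp (- h x / \<sigma>\<^sup>2)"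
    by (simp add: w_def exp_diff exp_minus divide_inverse)
  then have weight: "\<gamma> x / r x * (\<phi> x)\<^sup>2 * exp (- h x / \<sigma>\<^sup>2) * (r x * \<gamma> x) = w x"
    using r by (simp add: field_simps power2_eq_square)
  have "Lgen \<sigma> b \<gamma> r \<phi> g x = r x * \<gamma> x
      * (\<sigma>\<^sup>2 * lap g x + (\<Sum>i\<in>UNIV. (2 * \<sigma>\<^sup>2 * pd i lg x - pd i h x) * pd i g x))"
    by (simp add: Lgen_def drift grad_def inner_vec_def lg_def)
  then have "\<gamma> x / r x * (\<phi> x)\<^sup>2 * exp (- h x / \<sigma>\<^sup>2) * Lgen \<sigma> b \<gamma> r \<phi> g x
      = w x * (\<sigma>\<^sup>2 * lap g x + (\<Sum>i\<in>UNIV. (2 * \<sigma>\<^sup>2 * pd i lg x - pd i h x) * pd i g x))"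
    using weight by (simp only: mult.assoc[symmetric])
  also have "\<dots> = \<sigma>\<^sup>2 * weighted_laplacian w g x"
  proof -
    have "\<sigma>\<^sup>2 * (pd i w x * pd i g x) = w x * ((2 * \<sigma>\<^sup>2 * pd i lg x - pd i h x) * pd i g x)" for i
      using \<sigma> by (simp add: pd_w field_simps)
    then have "\<sigma>\<^sup>2 * (\<Sum>i\<in>UNIV. pd i w x * pd i g x)
        = w x * (\<Sum>i\<in>UNIV. (2 * \<sigma>\<^sup>2 * pd i lg x - pd i h x) * pd i g x)"
      unfolding sum_distrib_left by (rule sum.cong[OF refl])
    then show ?thesis
      unfolding weighted_laplacian_def grad_def inner_vec_def by (simp add: algebra_simps)
  qed
  finally show ?thesis by (simp add: w_def lg_def)
qed

theorem mainTheorem11: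
  fixes \<sigma> :: real
    and h :: "real^'d::finite \<Rightarrow> real"
    and b :: "real^'d \<Rightarrow> real^'d"
    and \<phi> :: "real^'d \<Rightarrow> real"
    and \<gamma>0 r0 F0 :: "real^'d \<Rightarrow> real \<Rightarrow> real"
    and \<rho>\<gamma> \<rho>r \<rho>F :: "real^'d \<Rightarrow> real"
  defines "\<gamma> \<equiv> \<lambda>x. \<gamma>0 x (conv \<rho>\<gamma> \<phi> x)"
      and "r \<equiv> \<lambda>x. r0 x (conv \<rho>r \<phi> x)"
      and "F \<equiv> \<lambda>x. F0 x (conv \<rho>F \<phi> x)"
  assumes sigma_pos: "\<sigma> > 0"
    and kernels: "\<forall>\<rho>\<in>{\<rho>\<gamma>, \<rho>r, \<rho>F}. smooth \<rho> \<and> (\<forall>x. \<rho> x \<ge> 0) \<and> integrable lborel \<rho>"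
    and smooth_h: "smooth h"
    and drift: "\<And>x. b x = grad h x"
    and smooth_phi: "smooth \<phi>" and phi_pos: "\<And>x. \<phi> x > 0"
    and smooth_gamma: "smooth \<gamma>" and gamma_pos: "\<And>x. \<gamma> x > 0"
    and smooth_r: "smooth r" and r_pos: "\<And>x. r x > 0"
    and stationary: "stationary_weak \<sigma> b \<gamma> r F \<phi>"
  shows "reversible_wrt (Lgen \<sigma> b \<gamma> r \<phi>)
           (\<lambda>x. \<gamma> x / r x * (\<phi> x)\<^sup>2 * exp (- h x / \<sigma>\<^sup>2))"
proof -
  define w where "w = (\<lambda>y. exp (2 * ln (\<gamma> y * \<phi> y) - h y / \<sigma>\<^sup>2))"
  have Ck: "Ck 1 \<gamma>" "Ck 1 \<phi>" "Ck 1 h"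
    using smooth_gamma smooth_phi smooth_h by (blast intro: smooth_imp_Ck_1)+
  have pos: "\<And>x. \<gamma> x * \<phi> x > 0"
    using gamma_pos phi_pos by simp
  have "Ck 1 (\<lambda>y. exp (2 * ln (\<gamma> y * \<phi> y) - inverse (\<sigma>\<^sup>2) * h y))"
    by (intro Ck_1_exp Ck_1_diff Ck_1_cmult Ck_1_ln Ck_1_mult Ck pos)
  then have w: "Ck 1 w"
    by (simp add: w_def divide_inverse mult.commute)
  have generator: "\<gamma> x / r x * (\<phi> x)\<^sup>2 * exp (- h x / \<sigma>\<^sup>2) * Lgen \<sigma> b \<gamma> r \<phi> v x
      = \<sigma>\<^sup>2 * weighted_laplacian w v x" for v x
    unfolding w_def using sigma_pos r_pos[of x]
    by (intro Lgen_eq_weighted_laplacian[OF _ drift Ck pos]) simp_all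
  have integrand: "\<gamma> x / r x * (\<phi> x)\<^sup>2 * exp (- h x / \<sigma>\<^sup>2) * u x * Lgen \<sigma> b \<gamma> r \<phi> v x
      = \<sigma>\<^sup>2 * (u x * weighted_laplacian w v x)" for u v x
    using arg_cong[OF generator, of "(*) (u x)"] by (simp add: ac_simps)
  show ?thesis
    unfolding reversible_wrt_def integrand integral_mult_right_zero
    by (auto intro: weighted_laplacian_symmetric[OF w])
qed

end
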